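(* Fix $n\in\mathbb{N}$ and $\delta\in\mathbb{R}$. For $\mu\in\mathbb{N}=\{1,2,\dots\}$ let $S_\mu$ be the set of pairs $(p,z)\in\mathbb{R}^n\times\mathbb{R}^n$ with $\delta>-\min_{i,j}\{p_i,z_j\}$ such that $(p+\delta)^{\mu}\succ_w (z+\delta)^{\mu}$ and $\sum_{i=1}^n (p_i+\delta)^k\geq\sum_{i=1}^n (z_i+\delta)^k$ for all $k\in\{1,\dots,\mu-1\}$. If $\mu_2>\mu_1$, then $S_{\mu_1}\subseteq S_{\mu_2}$. Consequently, increasing $\mu$ enlarges the set of rational functions $H(s)=K\prod_{i=1}^n(s-z_i)/\prod_{i=1}^n(s-p_i)$, $K>0$, with real zeros and poles that are certified logarithmically completely monotonic by the condition $(p,z)\in S_\mu$.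
   Context: $(x+\delta)^\mu$ denotes the vector with components $(x_i+\delta)^\mu$. For $x\in\mathbb{R}^n$, $x^{\downarrow}$ is the vector of its components sorted in descending order; $x\succ_w y$ means $\sum_{i=1}^k x^{\downarrow}_i\geq\sum_{i=1}^k y^{\downarrow}_i$ for all $k=1,\dots,n$. (The condition $(p,z)\in S_\mu$ for some $\mu,\delta$ is a sufficient condition for $H$ to be logarithmically completely monotonic.) *)

theory Defs
  imports Complex_Main
begin

text \<open>Vectors of R^n are represented as real lists of length n.
  The decreasing rearrangement x\<down> is rev (sort x).\<close>

definition decr :: "real list \<Rightarrow> real list" where
  "decr x = rev (sort x)"

definition weak_maj :: "real list \<Rightarrow> real list \<Rightarrow> bool" where
  "weak_maj x y \<longleftrightarrow> length x = length y \<and>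
     (\<forall>k\<in>{1..length x}. sum_list (take k (decr x)) \<ge> sum_list (take k (decr y)))"

definition shiftpow :: "real \<Rightarrow> nat \<Rightarrow> real list \<Rightarrow> real list" where
  "shiftpow \<delta> \<mu> x = map (\<lambda>t. (t + \<delta>) ^ \<mu>) x"

text \<open>The set S_\<mu>. The condition \<delta> > - min_{i,j} {p_i, z_j} is written out as:
  \<delta> > - x for every component x of p and of z.\<close>
definition S_set :: "nat \<Rightarrow> real \<Rightarrow> nat \<Rightarrow> (real list \<times> real list) set" where
  "S_set n \<delta> \<mu> = {(p, z). length p = n \<and> length z = n \<and>
      (\<forall>x \<in> set p \<union> set z. \<delta> > - x) \<and>
      weak_maj (shiftpow \<delta> \<mu> p) (shiftpow \<delta> \<mu> z) \<and>
      (\<forall>k\<in>{1..<\<mu>}. sum_list (shiftpow \<delta> k p) \<ge> sum_list (shiftpow \<delta> k z))}"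

end

theory Submission
  imports Defs "HOL-Analysis.Convex" "HOL-Library.Multiset"
begin

text \<open>Write \<open>x\<close> and \<open>y\<close> for the decreasing rearrangements of \<open>p + \<delta>\<close> and \<open>z + \<delta>\<close>, which are
  positive. For \<open>m \<ge> \<mu>\<close> the map \<open>s \<mapsto> s powr (m / \<mu>)\<close> is increasing and convex on \<open>(0, \<infinity>)\<close> and
  sends \<open>x\<^sup>\<mu>\<close> to \<open>x\<^sup>m\<close>, so it suffices that weak majorization of decreasingly ordered vectors
  \<open>a \<succ>\<^sub>w b\<close> is preserved by every increasing convex \<open>f\<close> (Tomic--Weyl). For this write
  \<open>f a\<^sub>i - f b\<^sub>i = c\<^sub>i (a\<^sub>i - b\<^sub>i)\<close> with the secant slopes \<open>c\<^sub>i\<close>: they are nonnegative since \<open>f\<close> is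
  increasing and decrease with \<open>i\<close> since both \<open>a\<close> and \<open>b\<close> do and \<open>f\<close> is convex. Abel summation
  against the nonnegative partial sums of \<open>a - b\<close> then gives \<open>f(a) \<succ>\<^sub>w f(b)\<close>. The power-sum
  conditions for the new exponents are the case \<open>k = n\<close> of the weak majorizations.\<close>

lemma sum_mult_nonneg_if_partial_sums_nonneg:
  fixes c d :: "nat \<Rightarrow> real"
  assumes partial_sums: "\<And>j. j \<le> n \<Longrightarrow> 0 \<le> (\<Sum>i<j. d i)"
    and nonneg: "\<And>i. i < n \<Longrightarrow> d i \<noteq> 0 \<Longrightarrow> 0 \<le> c i"
    and antitone: "\<And>i j. i < j \<Longrightarrow> j < n \<Longrightarrow> d i \<noteq> 0 \<Longrightarrow> d j \<noteq> 0 \<Longrightarrow> c j \<le> c i"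
  shows "0 \<le> (\<Sum>i<n. c i * d i)"
proof -
  have "l * (\<Sum>i<k. d i) \<le> (\<Sum>i<k. c i * d i)"
    if "k \<le> n" "0 \<le> l" "\<And>i. i < k \<Longrightarrow> d i \<noteq> 0 \<Longrightarrow> l \<le> c i" for k l
    using that
  proof (induction k arbitrary: l)
    case 0
    then show ?case by simp
  next
    case (Suc k)
    show ?case
    proof (cases "d k = 0")
      case True
      then show ?thesis using Suc by simp
    next
      case False
      have "c k * (\<Sum>i<k. d i) \<le> (\<Sum>i<k. c i * d i)"
        using Suc.prems nonneg antitone False by (intro Suc.IH) auto
      moreover have "l * (\<Sum>i<Suc k. d i) \<le> c k * (\<Sum>i<Suc k. d i)"
        using Suc.prems False partial_sums[of "Suc k"] by (intro mult_right_mono) auto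
      ultimately show ?thesis by (simp add: algebra_simps)
    qed
  qed
  from this[of n 0] show ?thesis using nonneg by simp
qed

lemma convex_on_secant_slope_mono_left:
  fixes f :: "real \<Rightarrow> real"
  assumes f: "convex_on I f" and I: "x \<in> I" "x' \<in> I" "v \<in> I"
    and "x' \<le> x" "x \<noteq> v" "x' \<noteq> v"
  shows "(f x' - f v) / (x' - v) \<le> (f x - f v) / (x - v)"
proof -
  have swap: "(f a - f b) / (a - b) = (f b - f a) / (b - a)" for a b
    by (simp add: divide_simps) (auto simp: algebra_simps)
  consider "x' = x" | "v < x'" "x' < x" | "x' < x" "x < v" | "x' < v" "v < x"
    using assms by linarith
  then show ?thesis
  proof cases
    case 1
    then show ?thesis by simp
  next
    case 2
    from convex_on_slope_le(1)[OF f I(3) I(1) 2] show ?thesis by (simp add: swap)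
  next
    case 3
    from convex_on_slope_le(2)[OF f I(2) I(3) 3] show ?thesis by (simp add: swap)
  next
    case 4
    from convex_on_slope_le[OF f I(2) I(1) 4] show ?thesis by (metis swap order_trans)
  qed
qed

lemma convex_on_secant_slope_mono:
  fixes f :: "real \<Rightarrow> real"
  assumes f: "convex_on I f" and I: "a \<in> I" "b \<in> I" "a' \<in> I" "b' \<in> I"
    and le: "a' \<le> a" "b' \<le> b" and ne: "a \<noteq> b" "a' \<noteq> b'"
  shows "(f a' - f b') / (a' - b') \<le> (f a - f b) / (a - b)"
proof -
  have swap: "(f s - f t) / (s - t) = (f t - f s) / (t - s)" for s t
    by (simp add: divide_simps) (auto simp: algebra_simps)
  show ?thesis
  proof (cases "a = b'")
    case True
    have "(f a' - f b') / (a' - b') \<le> (f a' - f b) / (a' - b)"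
      using convex_on_secant_slope_mono_left[OF f I(2,4,3)] assms True by (simp add: swap)
    also have "\<dots> \<le> (f a - f b) / (a - b)"
      using convex_on_secant_slope_mono_left[OF f I(1,3,2)] assms True by simp
    finally show ?thesis .
  next
    case False
    have "(f a' - f b') / (a' - b') \<le> (f a - f b') / (a - b')"
      using convex_on_secant_slope_mono_left[OF f I(1,3,4)] assms False by simp
    also have "\<dots> \<le> (f a - f b) / (a - b)"
      using convex_on_secant_slope_mono_left[OF f I(2,4,1)] assms False by (simp add: swap)
    finally show ?thesis .
  qed
qed

lemma partial_sums_convex_mono:
  fixes a b :: "nat \<Rightarrow> real" and f :: "real \<Rightarrow> real"
  assumes convex: "convex_on I f" and mono: "mono_on I f"
    and a: "\<And>i. i < n \<Longrightarrow> a i \<in> I" "\<And>i j. i \<le> j \<Longrightarrow> j < n \<Longrightarrow> a j \<le> a i"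
    and b: "\<And>i. i < n \<Longrightarrow> b i \<in> I" "\<And>i j. i \<le> j \<Longrightarrow> j < n \<Longrightarrow> b j \<le> b i"
    and maj: "\<And>j. j \<le> n \<Longrightarrow> (\<Sum>i<j. b i) \<le> (\<Sum>i<j. a i)"
    and "k \<le> n"
  shows "(\<Sum>i<k. f (b i)) \<le> (\<Sum>i<k. f (a i))"
proof -
  define d where "d i = a i - b i" for i
  define c where "c i = (f (a i) - f (b i)) / d i" for i
  have "0 \<le> (\<Sum>i<k. c i * d i)"
  proof (rule sum_mult_nonneg_if_partial_sums_nonneg)
    show "0 \<le> (\<Sum>i<j. d i)" if "j \<le> k" for j
      using maj[of j] that \<open>k \<le> n\<close> by (simp add: d_def sum_subtractf)
    show "0 \<le> c i" if "i < k" "d i \<noteq> 0" for i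
      using that \<open>k \<le> n\<close> a(1) b(1) mono
      by (cases "a i < b i") (auto simp: c_def d_def zero_le_divide_iff mono_on_def)
    show "c j \<le> c i" if "i < j" "j < k" "d i \<noteq> 0" "d j \<noteq> 0" for i j
      using that \<open>k \<le> n\<close> a b unfolding c_def d_def
      by (intro convex_on_secant_slope_mono[OF convex]) auto
  qed
  also have "\<dots> = (\<Sum>i<k. f (a i) - f (b i))"
    by (intro sum.cong) (auto simp: c_def d_def)
  finally show ?thesis by (simp add: sum_subtractf)
qed

lemma decr_map_mono:
  assumes "mono_on (set xs) f"
  shows "decr (map f xs) = map f (decr xs)"
proof -
  have "sort (map f xs) = map f (sort xs)"
    using assms by (intro properties_for_sort sorted_map_mono) auto
  then show ?thesis by (simp add: decr_def rev_map)
qed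

lemma length_decr [simp]: "length (decr xs) = length xs"
  by (simp add: decr_def)

lemma set_decr [simp]: "set (decr xs) = set xs"
  by (simp add: decr_def)

lemma sum_list_decr [simp]: "sum_list (decr xs) = sum_list xs"
  by (metis decr_def mset_rev mset_sort sum_mset_sum_list)

lemma decr_nth_antimono:
  assumes "i \<le> j" "j < length xs"
  shows "decr xs ! j \<le> decr xs ! i"
  using assms by (simp add: decr_def rev_nth sorted_nth_mono)

lemma weak_maj_iff_partial_sums:
  "weak_maj x y \<longleftrightarrow> length x = length y \<and>
     (\<forall>k \<le> length x. (\<Sum>i<k. decr y ! i) \<le> (\<Sum>i<k. decr x ! i))"
proof -
  have take: "sum_list (take k (decr xs)) = (\<Sum>i<k. decr xs ! i)" if "k \<le> length xs" for k xs
    using that by (simp add: sum_list_sum_nth min_def atLeast0LessThan)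
  have "(\<forall>k \<in> {1..length x}. P k) \<longleftrightarrow> (\<forall>k \<le> length x. P k)" if "P 0" for P
    using that by (auto simp: Suc_le_eq)
  from this[of "\<lambda>k. sum_list (take k (decr y)) \<le> sum_list (take k (decr x))"] show ?thesis
    unfolding weak_maj_def by (auto simp: take)
qed

lemma weak_maj_imp_sum_list_le:
  assumes "weak_maj x y"
  shows "sum_list y \<le> sum_list x"
proof -
  have "sum_list (decr xs) = (\<Sum>i<length xs. decr xs ! i)" for xs :: "real list"
    by (simp add: sum_list_sum_nth atLeast0LessThan)
  with assms show ?thesis
    unfolding weak_maj_iff_partial_sums by (metis order_refl sum_list_decr)
qed

lemma weak_maj_map_convex_mono:
  assumes maj: "weak_maj x y" and f: "convex_on I f" "mono_on I f"
    and I: "set x \<subseteq> I" "set y \<subseteq> I"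
  shows "weak_maj (map f x) (map f y)"
proof -
  have len: "length x = length y"
    and partial: "\<And>k. k \<le> length x \<Longrightarrow> (\<Sum>i<k. decr y ! i) \<le> (\<Sum>i<k. decr x ! i)"
    using maj unfolding weak_maj_iff_partial_sums by auto
  have "mono_on (set x) f" "mono_on (set y) f"
    using f I by (auto intro: mono_on_subset)
  then have decr: "decr (map f x) = map f (decr x)" "decr (map f y) = map f (decr y)"
    by (simp_all add: decr_map_mono)
  have "(\<Sum>i<k. f (decr y ! i)) \<le> (\<Sum>i<k. f (decr x ! i))" if "k \<le> length x" for k
  proof (rule partial_sums_convex_mono[OF f _ _ _ _ partial that])
    show "decr x ! i \<in> I" "decr y ! i \<in> I" if "i < length x" for i
      using that len I nth_mem[of i "decr x"] nth_mem[of i "decr y"] by auto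
    show "decr x ! j \<le> decr x ! i" "decr y ! j \<le> decr y ! i" if "i \<le> j" "j < length x" for i j
      using that len by (simp_all add: decr_nth_antimono)
  qed
  with len show ?thesis
    unfolding weak_maj_iff_partial_sums decr by simp
qed

lemma weak_maj_power_mono:
  fixes x y :: "real list" and \<mu> m :: nat
  assumes maj: "weak_maj (map (\<lambda>t. t ^ \<mu>) x) (map (\<lambda>t. t ^ \<mu>) y)"
    and pos: "\<forall>t \<in> set x \<union> set y. 0 < t" and "1 \<le> \<mu>" "\<mu> \<le> m"
  shows "weak_maj (map (\<lambda>t. t ^ m) x) (map (\<lambda>t. t ^ m) y)"
proof -
  define f where "f s = s powr (real m / real \<mu>)" for s
  have "convex_on {0<..} f"
    unfolding f_def using assms by (intro powr_convex) auto
  moreover have "mono_on {0<..} f"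
    unfolding f_def by (auto intro!: mono_onI powr_mono2)
  ultimately have "weak_maj (map f (map (\<lambda>t. t ^ \<mu>) x)) (map f (map (\<lambda>t. t ^ \<mu>) y))"
    using pos by (intro weak_maj_map_convex_mono[OF maj]) auto
  moreover have "f (t ^ \<mu>) = t ^ m" if "0 < t" for t
    using that \<open>1 \<le> \<mu>\<close> by (simp add: f_def powr_realpow[symmetric] powr_powr)
  ultimately show ?thesis
    using pos by (simp cong: map_cong)
qed

theorem proposition4:
  fixes n :: nat and \<delta> :: real and \<mu>1 \<mu>2 :: nat
  assumes "\<mu>1 \<ge> 1" and "\<mu>2 > \<mu>1"
  shows "S_set n \<delta> \<mu>1 \<subseteq> S_set n \<delta> \<mu>2"
proof
  fix q assume "q \<in> S_set n \<delta> \<mu>1"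
  then obtain p z where q: "q = (p, z)" and len: "length p = n" "length z = n"
    and pos: "\<forall>x \<in> set p \<union> set z. \<delta> > - x"
    and maj: "weak_maj (shiftpow \<delta> \<mu>1 p) (shiftpow \<delta> \<mu>1 z)"
    and sums: "\<forall>k\<in>{1..<\<mu>1}. sum_list (shiftpow \<delta> k p) \<ge> sum_list (shiftpow \<delta> k z)"
    unfolding S_set_def by auto
  have shiftpow: "shiftpow \<delta> k w = map (\<lambda>t. t ^ k) (map (\<lambda>t. t + \<delta>) w)" for k w
    by (simp add: shiftpow_def)
  have maj_ge: "weak_maj (shiftpow \<delta> k p) (shiftpow \<delta> k z)" if "\<mu>1 \<le> k" for k
    using weak_maj_power_mono[OF maj[unfolded shiftpow] _ assms(1) that] pos
    by (force simp: shiftpow)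
  have "sum_list (shiftpow \<delta> k z) \<le> sum_list (shiftpow \<delta> k p)" if "k \<in> {1..<\<mu>2}" for k
    using sums that maj_ge[of k] weak_maj_imp_sum_list_le by (cases "k < \<mu>1") auto
  then show "q \<in> S_set n \<delta> \<mu>2"
    unfolding q S_set_def using len pos maj_ge[of \<mu>2] assms by auto
qed

end
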